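(* Let $n=2k$, $1<r<k$ with $\gcd(r,k)=1$, and $G(x)=\sum_{i=1}^{2^r-1}x^{(i2^{k-r}+1)(2^k-1)+1}$, a vectorial bent function $\mathbb{F}_{2^n}\to\mathbb{F}_{2^k}$. For $\lambda\in\mathbb{F}_{2^k}^*$ let $G_\lambda(x)=\mathrm{Tr}^k_1(\lambda G(x))$ and let $G_\lambda^*$ be its dual. Let $t=2^{r-1}-1$ and $d_t=(2^k-1)(t2^{k-r}+1)+1$ (so that $\gcd(d_t,2^n-1)=1$). For $\lambda\in\mathbb{F}_{2^k}^*$ let $\delta$ be the unique element of $\mathbb{F}_{2^n}$ with $\lambda=\delta^{d_t}$. Then $G_\lambda^*(x)=G_1^*(\delta^{-1}x)$. In particular, $D_aD_bG_\lambda^*=0$ for all $a,b\in\mathbb{F}_{2^k}^*$.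
   Context: $\mathrm{Tr}^m_1(x)=\sum_{i=0}^{m-1}x^{2^i}$. For a bent Boolean function $f$ on $\mathbb{F}_{2^n}$ (i.e. $|W_f(a)|=2^{n/2}$ for all $a$, where $W_f(a)=\sum_x(-1)^{f(x)+\mathrm{Tr}^n_1(ax)}$), the dual $f^*$ is defined by $W_f(a)=2^{n/2}(-1)^{f^*(a)}$. $D_aD_bf(x)=f(x)+f(x+a)+f(x+b)+f(x+a+b)$. *)

theory Defs
  imports Main
begin

text \<open>The field F_{2^n} is modelled by a finite field type 'a with CARD('a) = 2^n.
  Boolean functions take values in the prime field {0,1} of 'a.\<close>

definition tr :: "nat \<Rightarrow> 'a::field \<Rightarrow> 'a" where
  "tr m x = (\<Sum>i<m. x ^ (2 ^ i))"

definition subfield_pow2 :: "nat \<Rightarrow> 'a::field set" where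
  "subfield_pow2 k = {y. y ^ (2 ^ k) = y}"

definition sgn_bit :: "'a::field \<Rightarrow> int" where
  "sgn_bit b = (if b = 0 then 1 else -1)"

definition walsh :: "nat \<Rightarrow> ('a::{field,finite} \<Rightarrow> 'a) \<Rightarrow> 'a \<Rightarrow> int" where
  "walsh n f a = (\<Sum>x\<in>UNIV. sgn_bit (f x + tr n (a * x)))"

definition dual :: "nat \<Rightarrow> ('a::{field,finite} \<Rightarrow> 'a) \<Rightarrow> 'a \<Rightarrow> 'a" where
  "dual n f a = (if walsh n f a = 2 ^ (n div 2) then 0 else 1)"

definition D2 :: "('a::field \<Rightarrow> 'a) \<Rightarrow> 'a \<Rightarrow> 'a \<Rightarrow> 'a \<Rightarrow> 'a" where
  "D2 f a b x = f x + f (x + a) + f (x + b) + f (x + a + b)"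

definition Gfun :: "nat \<Rightarrow> nat \<Rightarrow> 'a::field \<Rightarrow> 'a" where
  "Gfun k r x = (\<Sum>i\<in>{1..2^r - 1}. x ^ ((i * 2^(k - r) + 1) * (2^k - 1) + 1))"

definition Glam :: "nat \<Rightarrow> nat \<Rightarrow> 'a::field \<Rightarrow> 'a \<Rightarrow> 'a" where
  "Glam k r lam x = tr k (lam * Gfun k r x)"

end

(*
  Every nonzero x of F_{2^n} is uniquely u * y with u in the unit circle U = {u. u^(2^k+1) = 1}
  and y in F_{2^k}^*. Since G is F_{2^k}-homogeneous and maps U into F_{2^k}, the Walsh
  transform of Tr_k(G) at a is 2^k (N(a) - 1), where N(a) counts the u in U with
  G(u) = Tr^n_k(a u); so the dual vanishes at a iff N(a) = 2.  Parametrising U - {1} by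
  u = ((s + 1) / s)^(2^(r-1)) with Tr^n_k(s) = 1 turns G(u) = Tr^n_k(a u) into the
  linearized equation (1 + Tr^n_k(a)) s^(2^r) + s = a.  On a coset x + F_{2^k} the
  coefficient is constant, so N counts preimages of an F_2-linear map on a coset of F_{2^k};
  when its kernel has two elements its image has index 2, and in every case the dual is
  affine on x + F_{2^k}, so its second derivatives in directions of F_{2^k} vanish.
  Finally lambda in F_{2^k}^* forces delta = lambda, and G_lambda(x) = G_1(lambda x)
  rescales the Walsh transform.
*)

theory Submission
  imports Defs "HOL-Number_Theory.Residues" "HOL-Algebra.Algebraic_Closure_Type"
begin

(* The library's finite_field_power_card_eq_same needs the sort finite_field, which a type
   variable of sort {field, finite} does not have; Lagrange in the HOL-Algebra unit group
   is used instead. *)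
lemma power_card_UNIV_eq_self:
  fixes x :: "'a::{field,finite}"
  shows "x ^ card (UNIV :: 'a set) = x"
proof (cases "x = 0")
  case False
  define R where "R = (ring_of_type_algebra :: 'a ring)"
  interpret field R unfolding R_def ..
  have pow: "x [^]\<^bsub>Multiplicative_Group.mult_of R\<^esub> n = x ^ n" for n
    by (induction n) (simp_all add: Multiplicative_Group.nat_pow_mult_of R_def ring_of_type_algebra_def)
  have order_units: "Coset.order (Multiplicative_Group.mult_of R) = card (UNIV :: 'a set) - 1"
    by (simp add: Coset.order_def R_def ring_of_type_algebra_def card_Diff_singleton)
  have "x [^]\<^bsub>Multiplicative_Group.mult_of R\<^esub> Coset.order (Multiplicative_Group.mult_of R) = (1::'a)"
    using group.pow_order_eq_1[OF field_mult_group] False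
    by (simp add: R_def ring_of_type_algebra_def)
  then have "x ^ (card (UNIV :: 'a set) - 1) = 1"
    by (simp only: pow order_units)
  then show ?thesis
    by (metis finite_UNIV_card_ge_0 finite power_minus_mult mult_1)
qed (simp add: finite_UNIV_card_ge_0)

lemma power_pred_eq_1_if_power_eq_self:
  fixes x :: "'a::field"
  assumes "x ^ m = x" "x \<noteq> 0" "0 < m"
  shows "x ^ (m - 1) = 1"
proof -
  have "x * x ^ (m - 1) = x * 1"
    using assms by (simp flip: power_Suc)
  then show ?thesis
    using assms(2) by simp
qed

lemma card_power_eq_affine_le:
  fixes a b :: "'a::idom"
  assumes "1 < m"
  shows "card {x. x ^ m = a * x + b} \<le> m"
proof -
  define p :: "'a poly" where "p = monom 1 m - [:b, a:]"
  have "coeff p m = 1"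
    using assms by (simp add: p_def coeff_pCons split: nat.split)
  then have "p \<noteq> 0" by auto
  moreover have "degree p \<le> m"
    unfolding p_def using assms by (intro degree_diff_le) (simp_all add: degree_monom_eq)
  moreover have "{x. x ^ m = a * x + b} = {x. poly p x = 0}"
    by (auto simp: p_def poly_monom algebra_simps)
  ultimately show ?thesis
    using card_poly_roots_bound[of p] by simp
qed

lemma tr_zero [simp]: "tr m (0::'a::field) = 0"
  by (simp add: tr_def power_0_left)

lemma card_tr_mult_eq_0_le:
  fixes c :: "'a::field"
  assumes "c \<noteq> 0" and "0 < m"
  shows "card {y. tr m (y * c) = 0} \<le> 2 ^ (m - 1)"
proof -
  define p :: "'a poly" where "p = (\<Sum>i<m. monom (c ^ 2 ^ i) (2 ^ i))"
  have poly_p: "poly p y = tr m (y * c)" for y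
    by (simp add: p_def poly_sum poly_monom tr_def power_mult_distrib mult.commute)
  have "coeff p (2 ^ (m - 1)) = (\<Sum>i<m. if i = m - 1 then c ^ 2 ^ i else 0)"
    by (simp add: p_def coeff_sum)
  also have "\<dots> = c ^ 2 ^ (m - 1)"
    using \<open>0 < m\<close> by simp
  finally have "p \<noteq> 0"
    using \<open>c \<noteq> 0\<close> by auto
  moreover have "degree p \<le> 2 ^ (m - 1)"
    unfolding p_def
  proof (rule degree_sum_le)
    fix i assume "i \<in> {..<m}"
    then have "(2::nat) ^ i \<le> 2 ^ (m - 1)"
      by (intro power_increasing) auto
    then show "degree (monom (c ^ 2 ^ i) (2 ^ i)) \<le> 2 ^ (m - 1)"
      using degree_monom_le order.trans by blast
  qed simp
  ultimately show ?thesis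
    using card_poly_roots_bound[of p] by (simp add: poly_p)
qed

lemma walsh_scale:
  fixes f :: "'a::{field,finite} \<Rightarrow> 'a"
  assumes "c \<noteq> 0"
  shows "walsh n (\<lambda>x. f (c * x)) a = walsh n f (inverse c * a)"
  unfolding walsh_def
  by (rule sum.reindex_bij_witness[where i = "\<lambda>y. inverse c * y" and j = "\<lambda>x. c * x"])
    (use assms in \<open>simp_all add: field_simps\<close>)

lemma dual_scale:
  fixes f :: "'a::{field,finite} \<Rightarrow> 'a"
  assumes "c \<noteq> 0"
  shows "dual n (\<lambda>x. f (c * x)) a = dual n f (inverse c * a)"
  by (simp add: dual_def walsh_scale[OF assms])

lemma D2_scale: "D2 (\<lambda>x. g (c * x)) a b x = D2 g (c * a) (c * b) (c * x)"
  by (simp add: D2_def distrib_left)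

locale char2_field =
  fixes ty :: "'a::field itself"
  assumes CHAR_eq_2: "CHAR('a) = 2"
begin

lemma two_eq_zero: "(2::'a) = 0"
  using of_nat_CHAR[where 'a='a] by (simp add: CHAR_eq_2)

lemma add_self [simp]: "x + x = (0::'a)"
  by (metis mult_2 mult_zero_left two_eq_zero)

lemma minus_eq_self [simp]: "- x = (x::'a)"
  by (metis add_self minus_unique)

lemma add_self_left [simp]: "x + (x + y) = (y::'a)"
  by (simp flip: add.assoc)

lemma diff_eq_add [simp]: "x - y = x + (y::'a)"
  by (simp del: minus_eq_self add: minus_eq_self[of y])

lemma add_eq_0_iff_eq: "x + y = (0::'a) \<longleftrightarrow> x = y"
  by (metis add_self add_eq_0_iff minus_eq_self)

lemma power_two_pow_add: "(x + y) ^ 2 ^ i = x ^ 2 ^ i + (y::'a) ^ 2 ^ i"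
  by (rule freshmans_dream') (simp_all add: CHAR_eq_2)

lemma power_two_pow_sum: "sum f I ^ 2 ^ i = (\<Sum>j\<in>I. (f j :: 'a) ^ 2 ^ i)"
  by (rule freshmans_dream_sum') (simp_all add: CHAR_eq_2)

lemma power_two_pow_inj: "x ^ 2 ^ i = y ^ 2 ^ i \<Longrightarrow> x = (y::'a)"
  by (metis power_two_pow_add add_eq_0_iff_eq power_eq_0_iff zero_less_numeral zero_less_power)

lemma of_nat_eq_parity: "(of_nat m :: 'a) = (if even m then 0 else 1)"
  by (induction m) (auto simp: two_eq_zero)

lemma geometric_sum: "(\<Sum>i=1..m. v ^ i) * (1 + v) = v + (v::'a) ^ Suc m"
proof (cases m)
  case (Suc n)
  have "(1 - v) * (\<Sum>i=1..m. v ^ i) = v ^ 1 - v ^ Suc m"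
    using Suc by (intro sum_gp_multiplied) simp
  then show ?thesis by (simp add: mult.commute)
qed simp

lemma tr_add: "tr m (x + y) = tr m x + tr m (y::'a)"
  by (simp add: tr_def power_two_pow_add sum.distrib)

lemma tr_double: "tr (m + m) z = tr m (z + (z::'a) ^ 2 ^ m)"
proof -
  have split: "(\<Sum>i<m + n. f i) = (\<Sum>i<m. f i) + (\<Sum>i<n. f (m + i))" for n and f :: "nat \<Rightarrow> 'a"
    by (induction n) (simp_all add: add.assoc)
  have "(z ^ 2 ^ m) ^ 2 ^ i = z ^ 2 ^ (m + i)" for i
    by (simp add: power_add power_mult)
  then show ?thesis
    by (simp add: tr_def split power_two_pow_add sum.distrib)
qed

lemma tr_squared: "tr m z ^ 2 = tr m z + z + (z::'a) ^ 2 ^ m"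
proof -
  have "tr m z ^ 2 = (\<Sum>i<m. z ^ 2 ^ Suc i)"
    using power_two_pow_sum[where i = 1, of "\<lambda>i. z ^ 2 ^ i" "{..<m}"]
    by (simp only: tr_def power_one_right power_mult[symmetric] power_Suc2[symmetric])
  also have "\<dots> + z = tr (Suc m) z"
    unfolding tr_def sum.lessThan_Suc_shift by (simp add: add.commute)
  also have "\<dots> = tr m z + z ^ 2 ^ m"
    by (simp add: tr_def)
  finally show ?thesis
    by (metis add.assoc add.commute add_self_left)
qed

lemma sgn_bit_add_one: "t = 0 \<or> t = 1 \<Longrightarrow> sgn_bit (t + 1) = - sgn_bit (t::'a)"
  by (auto simp: sgn_bit_def)

lemma mobius_equation_iff:
  fixes s S a b :: 'a
  assumes "s \<noteq> 0" "S \<noteq> 0"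
  shows "(s + 1) / s + (S + 1) / S = (a * ((S + 1) / S) + b) * (1 + (s + 1) / s)
    \<longleftrightarrow> (1 + a + b) * S + s = a"
proof -
  have lhs: "s * S * ((s + 1) / s + (S + 1) / S) = S + s"
    using assms by (simp add: field_simps two_eq_zero)
  have rhs: "s * S * ((a * ((S + 1) / S) + b) * (1 + (s + 1) / s)) = a * (S + 1) + b * S"
    using assms by (simp add: field_simps two_eq_zero)
  have "S + s + (a * (S + 1) + b * S) = (1 + a + b) * S + s + a"
    by (simp add: algebra_simps)
  then have "S + s = a * (S + 1) + b * S \<longleftrightarrow> (1 + a + b) * S + s = a"
    by (metis add_eq_0_iff_eq)
  then show ?thesis
    using assms lhs rhs by (metis mult_cancel_left mult_eq_0_iff)
qed

lemma card_preimage_coset: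
  fixes L :: "'a \<Rightarrow> 'a"
  assumes additive: "\<And>s t. L (s + t) = L s + L t"
    and coset: "\<And>s. s \<in> A \<longleftrightarrow> s + s1 \<in> H"
  shows "card {s \<in> A. L s = L s1 + y} = card {t \<in> H. L t = y}"
proof (rule bij_betw_same_card[OF bij_betwI[where g = "\<lambda>t. t + s1"]])
  show "(\<lambda>s. s + s1) \<in> {s \<in> A. L s = L s1 + y} \<rightarrow> {t \<in> H. L t = y}"
    using coset by (auto simp: additive ac_simps)
  show "(\<lambda>t. t + s1) \<in> {t \<in> H. L t = y} \<rightarrow> {s \<in> A. L s = L s1 + y}"
    using coset by (auto simp: additive ac_simps two_eq_zero)
qed (simp_all add: add.assoc)

lemma card_preimage_eq:
  fixes L :: "'a \<Rightarrow> 'a"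
  assumes additive: "\<And>s t. L (s + t) = L s + L t"
    and closed: "\<And>s t. s \<in> H \<Longrightarrow> t \<in> H \<Longrightarrow> s + t \<in> H"
  shows "card {t \<in> H. L t = y} = (if y \<in> L ` H then card {t \<in> H. L t = 0} else 0)"
proof (cases "y \<in> L ` H")
  case True
  then obtain t0 where t0: "t0 \<in> H" "y = L t0" by blast
  have "s \<in> H \<longleftrightarrow> s + t0 \<in> H" for s
    using closed[OF _ t0(1), of s] closed[OF _ t0(1), of "s + t0"] by (auto simp: add.assoc)
  then have "card {t \<in> H. L t = L t0 + 0} = card {t \<in> H. L t = 0}"
    by (rule card_preimage_coset[OF additive])
  then show ?thesis using True t0 by simp
next
  case False
  then have empty: "{t \<in> H. L t = y} = {}" by auto
  show ?thesis unfolding empty using False by simp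
qed

lemma card_eq_card_kernel_mult_card_image:
  fixes L :: "'a \<Rightarrow> 'a"
  assumes "finite H"
    and additive: "\<And>s t. L (s + t) = L s + L t"
    and closed: "\<And>s t. s \<in> H \<Longrightarrow> t \<in> H \<Longrightarrow> s + t \<in> H"
  shows "card H = card {t \<in> H. L t = 0} * card (L ` H)"
proof -
  have "card H = (\<Sum>y\<in>L ` H. card {t \<in> H. L t = y})"
    using sum.image_gen[OF \<open>finite H\<close>, of "\<lambda>_. 1 :: nat" L] by simp
  also have "\<dots> = (\<Sum>y\<in>L ` H. card {t \<in> H. L t = 0})"
    by (intro sum.cong refl) (simp add: card_preimage_eq[OF additive closed])
  finally show ?thesis by simp
qed

lemma index_two_add_mem_iff:
  fixes H M :: "'a set"
  assumes "finite H" and "M \<subseteq> H" and "card H = 2 * card M"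
    and closed_H: "\<And>s t. s \<in> H \<Longrightarrow> t \<in> H \<Longrightarrow> s + t \<in> H"
    and closed_M: "\<And>s t. s \<in> M \<Longrightarrow> t \<in> M \<Longrightarrow> s + t \<in> M"
    and "y \<in> H" "y' \<in> H"
  shows "y + y' \<in> M \<longleftrightarrow> (y \<in> M \<longleftrightarrow> y' \<in> M)"
proof -
  have "y + y' \<in> M" if "y \<notin> M" "y' \<notin> M"
  proof -
    have disjoint: "M \<inter> (\<lambda>z. y + z) ` M = {}"
    proof (safe)
      fix z assume "z \<in> M" "y + z \<in> M"
      then have "(y + z) + z \<in> M" using closed_M by blast
      then show "y + z \<in> {}" using \<open>y \<notin> M\<close> by (simp add: add.assoc)
    qed
    have "card (M \<union> (\<lambda>z. y + z) ` M) = card H"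
      using \<open>finite H\<close> \<open>M \<subseteq> H\<close> \<open>card H = 2 * card M\<close> disjoint
      by (simp add: card_Un_disjoint finite_subset card_image inj_on_def)
    moreover have "M \<union> (\<lambda>z. y + z) ` M \<subseteq> H"
      using \<open>M \<subseteq> H\<close> \<open>y \<in> H\<close> closed_H by auto
    ultimately have "M \<union> (\<lambda>z. y + z) ` M = H"
      using \<open>finite H\<close> by (intro card_subset_eq) auto
    then obtain z where "z \<in> M" "y' = y + z"
      using \<open>y' \<in> H\<close> \<open>y' \<notin> M\<close> by blast
    then show ?thesis by simp
  qed
  moreover have "y + y' \<in> M \<longleftrightarrow> y' \<in> M" if "y \<in> M"
    using closed_M[OF that] add_self_left[of y y'] by metis
  moreover have "y + y' \<in> M \<longleftrightarrow> y \<in> M" if "y' \<in> M"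
    using closed_M[OF _ that, of "y + y'"] closed_M[OF _ that, of y] by (auto simp: add.assoc)
  ultimately show ?thesis by blast
qed

lemma image_indicator_add:
  fixes L :: "'a \<Rightarrow> 'a" and H :: "'a set"
  assumes "finite H"
    and closed: "\<And>s t. s \<in> H \<Longrightarrow> t \<in> H \<Longrightarrow> s + t \<in> H"
    and additive: "\<And>s t. L (s + t) = L s + L t" and "L ` H \<subseteq> H"
    and kernel: "card {t \<in> H. L t = 0} = 2"
    and "y \<in> H" "y' \<in> H"
  shows "(if y + y' \<in> L ` H then 0 else 1)
    = (if y \<in> L ` H then 0 else 1) + (if y' \<in> L ` H then 0 else (1::'a))"
proof -
  have "card H = 2 * card (L ` H)"
    using card_eq_card_kernel_mult_card_image[OF \<open>finite H\<close> additive closed] kernel by simp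
  moreover have "s + t \<in> L ` H" if "s \<in> L ` H" "t \<in> L ` H" for s t
    using that closed by (auto simp flip: additive)
  ultimately show ?thesis
    using index_two_add_mem_iff[OF \<open>finite H\<close> \<open>L ` H \<subseteq> H\<close> _ closed _ \<open>y \<in> H\<close> \<open>y' \<in> H\<close>] by auto
qed

lemma D2_eq_0_if_card_preimage_indicator:
  fixes L g :: "'a \<Rightarrow> 'a" and H A :: "'a set"
  assumes "finite H"
    and closed: "\<And>s t. s \<in> H \<Longrightarrow> t \<in> H \<Longrightarrow> s + t \<in> H"
    and additive: "\<And>s t. L (s + t) = L s + L t" and "L ` H \<subseteq> H"
    and coset: "\<And>s s'. s \<in> A \<Longrightarrow> s' \<in> A \<longleftrightarrow> s + s' \<in> H"
    and g: "\<And>c. c \<in> H \<Longrightarrow> g (x + c) = (if card {s \<in> A. L s = x + c} = 2 then 0 else 1)"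
    and "a \<in> H" "b \<in> H"
  shows "D2 g a b x = 0"
proof -
  have "0 \<in> H"
    using closed[OF \<open>a \<in> H\<close> \<open>a \<in> H\<close>] by simp
  have D2_eq: "D2 g a b x = g (x + 0) + g (x + a) + g (x + b) + g (x + (a + b))"
    by (simp add: D2_def add.assoc)
  show ?thesis
  proof (cases "\<exists>c1\<in>H. card {s \<in> A. L s = x + c1} = 2")
    case False
    then have one: "g (x + c) = 1" if "c \<in> H" for c
      using g that by simp
    show ?thesis
      unfolding D2_eq one[OF \<open>0 \<in> H\<close>] one[OF \<open>a \<in> H\<close>] one[OF \<open>b \<in> H\<close>]
        one[OF closed[OF \<open>a \<in> H\<close> \<open>b \<in> H\<close>]]
      by (simp only: add_self add_0_left)
  next
    case True
    then obtain c1 where "c1 \<in> H" and two: "card {s \<in> A. L s = x + c1} = 2"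
      by blast
    then obtain s1 where "s1 \<in> A" "L s1 = x + c1"
      by (metis (mono_tags, lifting) card.empty empty_Collect_eq zero_neq_numeral)
    have coset_s1: "s \<in> A \<longleftrightarrow> s + s1 \<in> H" for s
      using coset[OF \<open>s1 \<in> A\<close>, of s] by (simp add: add.commute)
    have count: "card {s \<in> A. L s = x + c} = (if c1 + c \<in> L ` H then card {t \<in> H. L t = 0} else 0)"
      if "c \<in> H" for c
    proof -
      have xc: "x + c = L s1 + (c1 + c)"
        using \<open>L s1 = x + c1\<close> by (simp add: add.assoc)
      show ?thesis
        unfolding xc using card_preimage_coset[OF additive coset_s1, of "c1 + c"]
          card_preimage_eq[OF additive closed, of "c1 + c"]
        by simp
    qed
    have "L 0 = 0"
      using additive[of 0 0] by simp
    then have "0 \<in> L ` H"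
      using \<open>0 \<in> H\<close> by (metis image_eqI)
    then have kernel: "card {t \<in> H. L t = 0} = 2"
      using count[OF \<open>c1 \<in> H\<close>] two by simp
    define \<psi> where "\<psi> y = (if y \<in> L ` H then 0 else 1 :: 'a)" for y
    have g_\<psi>: "g (x + c) = \<psi> (c1 + c)" if "c \<in> H" for c
      using g[OF that] count[OF that] kernel by (simp add: \<psi>_def)
    have \<psi>_add: "\<psi> (y + y') = \<psi> y + \<psi> y'" if "y \<in> H" "y' \<in> H" for y y'
      unfolding \<psi>_def using image_indicator_add[OF assms(1-4) kernel that] .
    show ?thesis
      unfolding D2_eq g_\<psi>[OF \<open>0 \<in> H\<close>] g_\<psi>[OF \<open>a \<in> H\<close>] g_\<psi>[OF \<open>b \<in> H\<close>]
        g_\<psi>[OF closed[OF \<open>a \<in> H\<close> \<open>b \<in> H\<close>]]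
      using \<open>c1 \<in> H\<close> \<open>a \<in> H\<close> \<open>b \<in> H\<close> by (simp add: \<psi>_add closed ac_simps)
  qed
qed

end

locale quadratic_gf2 =
  fixes k :: nat and ty :: "'a::{field,finite} itself"
  assumes card_UNIV: "card (UNIV :: 'a set) = 2 ^ (2 * k)"
begin

sublocale char2_field ty
proof
  have "Factorial_Ring.prime CHAR('a)"
    using finite_imp_CHAR_pos[where 'a='a] prime_CHAR_semidom by simp
  moreover have "CHAR('a) dvd 2 ^ (2 * k)"
    using CHAR_dvd_CARD[where 'a='a] card_UNIV by simp
  ultimately show "CHAR('a) = 2"
    by (metis prime_dvd_power primes_dvd_imp_eq two_is_prime_nat normalize_nat_def)
qed

lemma k_pos: "0 < k"
proof -
  have "card {0, 1 :: 'a} \<le> card (UNIV :: 'a set)"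
    by (rule card_mono) auto
  then show ?thesis
    using card_UNIV by (cases k) auto
qed

lemma one_less_two_pow_k: "1 < (2::nat) ^ k"
  using k_pos by (intro one_less_power) simp_all

lemma power_card_eq_self: "x ^ 2 ^ (2 * k) = (x::'a)"
  using power_card_UNIV_eq_self[of x] by (simp add: card_UNIV)

lemma power_card_minus_one: "x \<noteq> 0 \<Longrightarrow> x ^ (2 ^ (2 * k) - 1) = (1::'a)"
  by (rule power_pred_eq_1_if_power_eq_self[OF power_card_eq_self]) simp_all

lemma frobenius_k_twice [simp]: "(x ^ 2 ^ k) ^ 2 ^ k = (x::'a)"
proof -
  have "(x ^ 2 ^ k) ^ 2 ^ k = x ^ 2 ^ (2 * k)"
    by (simp only: power_mult[symmetric] power_add[symmetric] mult_2)
  then show ?thesis by (simp only: power_card_eq_self)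
qed

abbreviation Fk :: "'a set" where "Fk \<equiv> subfield_pow2 k"

lemma mem_Fk_iff: "x \<in> Fk \<longleftrightarrow> x ^ 2 ^ k = x"
  by (simp add: subfield_pow2_def)

lemma Fk_zero [simp]: "0 \<in> Fk" and Fk_one [simp]: "1 \<in> Fk"
  by (simp_all add: mem_Fk_iff)

lemma Fk_add: "x \<in> Fk \<Longrightarrow> y \<in> Fk \<Longrightarrow> x + y \<in> Fk"
  by (simp add: mem_Fk_iff power_two_pow_add)

lemma Fk_mult: "x \<in> Fk \<Longrightarrow> y \<in> Fk \<Longrightarrow> x * y \<in> Fk"
  by (simp add: mem_Fk_iff power_mult_distrib)

lemma Fk_inverse: "x \<in> Fk \<Longrightarrow> inverse x \<in> Fk"
  by (simp add: mem_Fk_iff power_inverse)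

lemma Fk_power: "x \<in> Fk \<Longrightarrow> x ^ m \<in> Fk"
  by (metis mem_Fk_iff power_mult mult.commute)

lemma Fk_power_pred: "y \<in> Fk \<Longrightarrow> y \<noteq> 0 \<Longrightarrow> y ^ (2 ^ k - 1) = 1"
  by (rule power_pred_eq_1_if_power_eq_self) (simp_all add: mem_Fk_iff)

lemma Fk_power_affine: "y \<in> Fk \<Longrightarrow> y \<noteq> 0 \<Longrightarrow> y ^ (m * (2 ^ k - 1) + 1) = y"
  using Fk_power_pred[of y] by (simp add: power_add power_mult mult.commute[of m])

definition rel_trace :: "'a \<Rightarrow> 'a" where
  "rel_trace x = x + x ^ 2 ^ k"

lemma rel_trace_mem_Fk: "rel_trace x \<in> Fk"
  by (simp add: rel_trace_def mem_Fk_iff power_two_pow_add add.commute)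

lemma rel_trace_eq_0_iff: "rel_trace x = 0 \<longleftrightarrow> x \<in> Fk"
  by (auto simp: rel_trace_def mem_Fk_iff add_eq_0_iff_eq)

lemma rel_trace_add: "rel_trace (x + y) = rel_trace x + rel_trace y"
  by (simp add: rel_trace_def power_two_pow_add algebra_simps)

lemma rel_trace_mult_Fk: "y \<in> Fk \<Longrightarrow> rel_trace (y * x) = y * rel_trace x"
  by (simp add: rel_trace_def mem_Fk_iff power_mult_distrib algebra_simps)

lemma rel_trace_add_Fk: "c \<in> Fk \<Longrightarrow> rel_trace (x + c) = rel_trace x"
  by (simp add: rel_trace_add rel_trace_eq_0_iff)

definition unit_circle :: "'a set" where
  "unit_circle = {u. u ^ (2 ^ k + 1) = 1}"

lemma unit_circle_nonzero: "u \<in> unit_circle \<Longrightarrow> u \<noteq> 0"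
  by (auto simp: unit_circle_def)

lemma unit_circle_conj: "u \<in> unit_circle \<Longrightarrow> u ^ 2 ^ k = inverse u"
proof -
  assume "u \<in> unit_circle"
  then have "u * u ^ 2 ^ k = 1"
    by (simp only: unit_circle_def mem_Collect_eq Suc_eq_plus1[symmetric] power_Suc)
  then show "u ^ 2 ^ k = inverse u"
    by (rule inverse_unique[symmetric])
qed

lemma unit_circle_mult: "u \<in> unit_circle \<Longrightarrow> w \<in> unit_circle \<Longrightarrow> u * w \<in> unit_circle"
  unfolding unit_circle_def by (simp only: mem_Collect_eq power_mult_distrib mult_1_left)

lemma unit_circle_inverse: "u \<in> unit_circle \<Longrightarrow> inverse u \<in> unit_circle"
  unfolding unit_circle_def by (simp only: mem_Collect_eq power_inverse inverse_1)

lemma unit_circle_power: "u \<in> unit_circle \<Longrightarrow> u ^ m \<in> unit_circle"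
proof -
  have "(u ^ m) ^ (2 ^ k + 1) = (u ^ (2 ^ k + 1)) ^ m"
    by (simp only: power_mult[symmetric] mult.commute)
  then show "u \<in> unit_circle \<Longrightarrow> u ^ m \<in> unit_circle"
    by (simp add: unit_circle_def)
qed

lemma unit_circle_one [simp]: "1 \<in> unit_circle"
  by (simp add: unit_circle_def)

lemma unit_circle_power_mod: "u \<in> unit_circle \<Longrightarrow> u ^ ((2 ^ k + 1) * m + j) = u ^ j"
  unfolding unit_circle_def by (simp only: mem_Collect_eq power_add power_mult power_one mult_1_left)

lemma unit_circle_Int_Fk: "u \<in> unit_circle \<Longrightarrow> u \<in> Fk \<Longrightarrow> u = 1"
proof -
  assume u: "u \<in> unit_circle" "u \<in> Fk"
  then have "u = inverse u"
    using unit_circle_conj[OF u(1)] by (simp add: mem_Fk_iff)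
  then have "u * u = 1"
    using unit_circle_nonzero[OF u(1)] by (metis right_inverse)
  then have "u ^ 2 ^ 1 = 1 ^ 2 ^ 1"
    by (simp add: power2_eq_square)
  then show "u = 1"
    by (rule power_two_pow_inj)
qed

lemma card_Fk_le: "card Fk \<le> 2 ^ k"
proof -
  have "Fk = {x. x ^ 2 ^ k = 1 * x + 0}"
    by (auto simp: mem_Fk_iff)
  then show ?thesis
    using card_power_eq_affine_le[of "2 ^ k" 1 0] one_less_two_pow_k by simp
qed

lemma card_unit_circle_le: "card unit_circle \<le> 2 ^ k + 1"
proof -
  have "unit_circle = {x. x ^ (2 ^ k + 1) = 0 * x + 1}"
    by (simp add: unit_circle_def)
  then show ?thesis
    using card_power_eq_affine_le[of "2 ^ k + 1" 0 1] by simp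
qed

lemma square_of_power_half_card: "(x ^ 2 ^ (2 * k - 1)) ^ 2 = (x::'a)"
proof -
  have "2 ^ (2 * k - 1) * 2 = (2::nat) ^ (2 * k)"
    using k_pos by (intro power_minus_mult) simp
  then show ?thesis
    by (simp only: power_mult[symmetric] power_card_eq_self)
qed

lemma norm_mem_Fk: "x ^ (2 ^ k + 1) \<in> Fk"
  by (simp add: mem_Fk_iff power_add power_mult_distrib mult.commute)

lemma polar_decomposition_unique:
  assumes u: "u \<in> unit_circle" "u' \<in> unit_circle" and y: "y \<in> Fk" "y' \<in> Fk" "y \<noteq> 0"
    and eq: "u * y = u' * y'"
  shows "u = u' \<and> y = y'"
proof -
  have "u * inverse u' = y' * inverse y"
    using eq y unit_circle_nonzero[OF u(2)] by (simp add: field_simps)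
  moreover have "u * inverse u' \<in> unit_circle"
    using u by (simp add: unit_circle_mult unit_circle_inverse)
  moreover have "y' * inverse y \<in> Fk"
    using y by (simp add: Fk_mult Fk_inverse)
  ultimately have "u * inverse u' = 1"
    using unit_circle_Int_Fk by metis
  then have "u = u'"
    using unit_circle_nonzero[OF u(2)] by (simp add: field_simps)
  then show ?thesis
    using eq unit_circle_nonzero[OF u(1)] by simp
qed

lemma polar_decomposition_exists:
  assumes "x \<noteq> 0"
  obtains u y where "u \<in> unit_circle" "y \<in> Fk" "y \<noteq> 0" "x = u * y"
proof -
  define N where "N = x ^ (2 ^ k + 1)"
  define y where "y = N ^ 2 ^ (2 * k - 1)"
  have "N \<in> Fk" "N \<noteq> 0"
    using norm_mem_Fk assms by (simp_all add: N_def)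
  have "y \<in> Fk"
    unfolding y_def using \<open>N \<in> Fk\<close> by (rule Fk_power)
  have "y ^ 2 = N"
    unfolding y_def by (rule square_of_power_half_card)
  then have "y \<noteq> 0"
    using \<open>N \<noteq> 0\<close> by auto
  have "(x / y) ^ (2 ^ k + 1) = N / (y ^ 2 ^ k * y)"
    by (simp only: power_divide N_def power_add power_one_right times_divide_times_eq)
  also have "y ^ 2 ^ k * y = N"
    using \<open>y \<in> Fk\<close> \<open>y ^ 2 = N\<close> by (simp add: mem_Fk_iff power2_eq_square)
  finally have "x / y \<in> unit_circle"
    using \<open>N \<noteq> 0\<close> by (simp add: unit_circle_def)
  then show ?thesis
    using that \<open>y \<in> Fk\<close> \<open>y \<noteq> 0\<close> by simp
qed

lemma polar_decomposition:
  "bij_betw (\<lambda>(u, y). u * y) (unit_circle \<times> (Fk - {0})) (UNIV - {0})"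
proof (rule bij_betw_imageI)
  show "inj_on (\<lambda>(u, y). u * y) (unit_circle \<times> (Fk - {0}))"
  proof (rule inj_onI)
    fix p q
    assume "p \<in> unit_circle \<times> (Fk - {0})" "q \<in> unit_circle \<times> (Fk - {0})"
      and "(\<lambda>(u, y). u * y) p = (\<lambda>(u, y). u * y) q"
    moreover obtain u y u' y' where "p = (u, y)" "q = (u', y')"
      by fastforce
    ultimately show "p = q"
      using polar_decomposition_unique[of u u' y y'] by simp
  qed
  have "x \<in> (\<lambda>(u, y). u * y) ` (unit_circle \<times> (Fk - {0}))" if x: "x \<noteq> 0" for x
  proof -
    obtain u y where "u \<in> unit_circle" "y \<in> Fk" "y \<noteq> 0" "x = u * y"
      using polar_decomposition_exists[OF x] .
    then show ?thesis
      by (intro rev_image_eqI[of "(u, y)"]) auto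
  qed
  then show "(\<lambda>(u, y). u * y) ` (unit_circle \<times> (Fk - {0})) = UNIV - {0}"
    by (auto dest: unit_circle_nonzero)
qed

lemma card_Fk: "card Fk = 2 ^ k" and card_unit_circle: "card unit_circle = 2 ^ k + 1"
proof -
  have "card unit_circle * (card Fk - 1) = 2 ^ k * 2 ^ k - 1"
    using bij_betw_same_card[OF polar_decomposition] card_UNIV
    by (simp add: card_cartesian_product card_Diff_singleton flip: power_add mult_2)
  also have "\<dots> = (2 ^ k + 1) * (2 ^ k - 1)"
    by (simp add: algebra_simps diff_mult_distrib2)
  finally have prod: "card unit_circle * (card Fk - 1) = (2 ^ k + 1) * (2 ^ k - 1)" .
  have "Fk \<noteq> {}"
    using Fk_zero by blast
  then have "1 \<le> card Fk"
    by (simp add: Suc_le_eq card_gt_0_iff)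
  show "card Fk = 2 ^ k"
  proof (rule ccontr)
    assume "card Fk \<noteq> 2 ^ k"
    then have "card Fk - 1 < 2 ^ k - 1"
      using card_Fk_le \<open>1 \<le> card Fk\<close> by linarith
    have "card unit_circle * (card Fk - 1) \<le> (2 ^ k + 1) * (card Fk - 1)"
      using card_unit_circle_le by (rule mult_le_mono1)
    also have "\<dots> < (2 ^ k + 1) * (2 ^ k - 1)"
      using \<open>card Fk - 1 < 2 ^ k - 1\<close> by (intro mult_less_mono2) simp_all
    finally show False
      using prod by simp
  qed
  then have "card unit_circle * (2 ^ k - 1) = (2 ^ k + 1) * (2 ^ k - 1)"
    using prod by (simp only:)
  moreover have "2 ^ k - 1 \<noteq> (0::nat)"
    using one_less_two_pow_k by simp
  ultimately show "card unit_circle = 2 ^ k + 1"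
    by (metis mult_right_cancel)
qed

lemma tr_2k: "tr (2 * k) z = tr k (rel_trace z)"
  by (simp add: mult_2 tr_double rel_trace_def)

lemma tr_Fk_cases: "z \<in> Fk \<Longrightarrow> tr k z = 0 \<or> tr k z = 1"
proof -
  assume "z \<in> Fk"
  then have "tr k z * tr k z = tr k z * 1"
    using tr_squared[of k z] by (simp add: mem_Fk_iff power2_eq_square add.assoc)
  then show ?thesis
    by (cases "tr k z = 0") simp_all
qed

lemma ex_tr_mult_eq_1:
  assumes "c \<in> Fk" "c \<noteq> 0"
  shows "\<exists>y\<in>Fk. tr k (y * c) = 1"
proof (rule ccontr)
  assume "\<not> ?thesis"
  then have "Fk \<subseteq> {y. tr k (y * c) = 0}"
    using tr_Fk_cases Fk_mult assms(1) by blast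
  then have "card Fk \<le> 2 ^ (k - 1)"
    using card_tr_mult_eq_0_le[OF assms(2) k_pos] card_mono[of "{y. tr k (y * c) = 0}" Fk] by simp
  then show False
    using card_Fk k_pos by simp
qed

lemma sum_sgn_bit_tr:
  assumes "c \<in> Fk"
  shows "(\<Sum>y\<in>Fk. sgn_bit (tr k (y * c))) = (if c = 0 then 2 ^ k else 0)"
proof (cases "c = 0")
  case True
  then show ?thesis by (simp add: sgn_bit_def card_Fk)
next
  case False
  obtain y0 where y0: "y0 \<in> Fk" "tr k (y0 * c) = 1"
    using ex_tr_mult_eq_1[OF assms False] by blast
  have "(\<Sum>y\<in>Fk. sgn_bit (tr k (y * c))) = (\<Sum>y\<in>Fk. sgn_bit (tr k ((y + y0) * c)))"
    by (rule sum.reindex_bij_witness[where i = "\<lambda>y. y + y0" and j = "\<lambda>y. y + y0"])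
      (auto simp: Fk_add y0 add.assoc)
  also have "\<dots> = (\<Sum>y\<in>Fk. - sgn_bit (tr k (y * c)))"
    using y0 tr_Fk_cases[OF Fk_mult[OF _ assms]]
    by (intro sum.cong refl) (simp add: distrib_right tr_add sgn_bit_add_one)
  finally show ?thesis
    using False by (simp add: sum_negf)
qed

lemma walsh_tr_homogeneous:
  fixes G :: "'a \<Rightarrow> 'a"
  assumes G_zero: "G 0 = 0"
    and G_homogeneous: "\<And>u y. u \<in> unit_circle \<Longrightarrow> y \<in> Fk \<Longrightarrow> y \<noteq> 0 \<Longrightarrow> G (u * y) = y * G u"
    and G_unit_circle: "\<And>u. u \<in> unit_circle \<Longrightarrow> G u \<in> Fk"
  shows "walsh (2 * k) (\<lambda>x. tr k (G x)) a
    = 2 ^ k * (int (card {u \<in> unit_circle. G u = rel_trace (a * u)}) - 1)"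
proof -
  define h where "h x = sgn_bit (tr k (G x) + tr (2 * k) (a * x))" for x
  define c where "c u = G u + rel_trace (a * u)" for u
  have c_Fk: "c u \<in> Fk" if "u \<in> unit_circle" for u
    using G_unit_circle[OF that] by (simp add: c_def Fk_add rel_trace_mem_Fk)
  have h_polar: "h (u * y) = sgn_bit (tr k (y * c u))"
    if u: "u \<in> unit_circle" and y: "y \<in> Fk" "y \<noteq> 0" for u y
  proof -
    have "a * (u * y) = y * (a * u)"
      by (simp add: mult_ac)
    then have "tr (2 * k) (a * (u * y)) = tr k (rel_trace (y * (a * u)))"
      by (simp only: tr_2k)
    also have "\<dots> = tr k (y * rel_trace (a * u))"
      using y by (simp add: rel_trace_mult_Fk)
    finally have "tr (2 * k) (a * (u * y)) = tr k (y * rel_trace (a * u))" .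
    then show ?thesis
      using G_homogeneous[OF u y] by (simp add: h_def c_def tr_add[symmetric] distrib_left)
  qed
  have inner: "(\<Sum>y\<in>Fk - {0}. h (u * y)) = (if c u = 0 then 2 ^ k else 0) - 1"
    if u: "u \<in> unit_circle" for u
  proof -
    have "(\<Sum>y\<in>Fk. sgn_bit (tr k (y * c u)))
        = sgn_bit (tr k (0 * c u)) + (\<Sum>y\<in>Fk - {0}. sgn_bit (tr k (y * c u)))"
      by (rule sum.remove) simp_all
    then show ?thesis
      using sum_sgn_bit_tr[OF c_Fk[OF u]] h_polar[OF u] by (simp add: sgn_bit_def)
  qed
  have "walsh (2 * k) (\<lambda>x. tr k (G x)) a = h 0 + (\<Sum>x\<in>UNIV - {0}. h x)"
    unfolding walsh_def h_def by (rule sum.remove) simp_all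
  also have "(\<Sum>x\<in>UNIV - {0}. h x) = (\<Sum>(u, y)\<in>unit_circle \<times> (Fk - {0}). h (u * y))"
    using sum.reindex_bij_betw[OF polar_decomposition, of h] by (simp add: case_prod_unfold)
  also have "\<dots> = (\<Sum>u\<in>unit_circle. (if c u = 0 then 2 ^ k else 0) - 1)"
    by (simp add: sum.cartesian_product[symmetric] inner)
  also have "\<dots> = 2 ^ k * int (card {u \<in> unit_circle. c u = 0}) - int (card unit_circle)"
    by (simp add: sum_subtractf sum.If_cases Int_def)
  finally show ?thesis
    by (simp add: h_def G_zero sgn_bit_def card_unit_circle c_def add_eq_0_iff_eq algebra_simps)
qed

lemma dual_tr_homogeneous:
  fixes G :: "'a \<Rightarrow> 'a"
  assumes "G 0 = 0"
    and "\<And>u y. u \<in> unit_circle \<Longrightarrow> y \<in> Fk \<Longrightarrow> y \<noteq> 0 \<Longrightarrow> G (u * y) = y * G u"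
    and "\<And>u. u \<in> unit_circle \<Longrightarrow> G u \<in> Fk"
  shows "dual (2 * k) (\<lambda>x. tr k (G x)) a
    = (if card {u \<in> unit_circle. G u = rel_trace (a * u)} = 2 then 0 else 1)"
  using walsh_tr_homogeneous[OF assms, of a] by (simp add: dual_def)

end

locale niho = quadratic_gf2 +
  fixes r :: nat
  assumes one_less_r: "1 < r" and r_less_k: "r < k"
begin

(* The exponent d_i of the paper; the theorem's d_t is niho_exponent (2^(r-1) - 1). *)
definition niho_exponent :: "nat \<Rightarrow> nat" where
  "niho_exponent i = (i * 2 ^ (k - r) + 1) * (2 ^ k - 1) + 1"

lemma Gfun_eq: "Gfun k r x = (\<Sum>i\<in>{1..2 ^ r - 1}. x ^ niho_exponent i)"
  by (simp add: Gfun_def niho_exponent_def)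

lemma Gfun_zero: "Gfun k r (0::'a) = 0"
  by (simp add: Gfun_eq power_0_left niho_exponent_def)

lemma Gfun_one: "Gfun k r (1::'a) = 1"
  using one_less_r by (simp add: Gfun_eq of_nat_eq_parity)

lemma Fk_power_niho_exponent: "y \<in> Fk \<Longrightarrow> y \<noteq> 0 \<Longrightarrow> y ^ niho_exponent i = y"
  unfolding niho_exponent_def by (rule Fk_power_affine)

lemma Gfun_homogeneous: "y \<in> Fk \<Longrightarrow> y \<noteq> 0 \<Longrightarrow> Gfun k r (x * y) = y * Gfun k r (x::'a)"
  by (simp add: Gfun_eq power_mult_distrib Fk_power_niho_exponent sum_distrib_left mult.commute)

lemma two_pow_r_mult: "(2::nat) ^ r * 2 ^ (k - r) = 2 ^ k"
  using r_less_k by (simp flip: power_add)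

lemma niho_exponent_reflect:
  assumes "i \<le> 2 ^ r"
  shows "niho_exponent i + niho_exponent (2 ^ r - i) = (2 ^ k + 1) * 2 ^ k"
proof -
  define A B Q where "A = i * 2 ^ (k - r)" and "B = (2 ^ r - i) * 2 ^ (k - r)" and "Q = 2 ^ k - (1::nat)"
  have "A + B = 2 ^ k"
    using assms two_pow_r_mult by (simp add: A_def B_def flip: add_mult_distrib)
  have "(2::nat) ^ k = Q + 1"
    by (simp add: Q_def)
  have "niho_exponent i = (A + 1) * Q + 1" "niho_exponent (2 ^ r - i) = (B + 1) * Q + 1"
    by (simp_all only: niho_exponent_def A_def B_def Q_def)
  then have "niho_exponent i + niho_exponent (2 ^ r - i) = (A + B + 2) * Q + 2"
    by (simp add: algebra_simps)
  also have "\<dots> = (Q + 1 + 1) * (Q + 1)"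
    using \<open>A + B = 2 ^ k\<close> \<open>2 ^ k = Q + 1\<close> by (simp add: algebra_simps)
  finally show ?thesis
    using \<open>2 ^ k = Q + 1\<close> by (simp add: mult.commute)
qed

lemma Gfun_unit_circle_mem_Fk:
  assumes u: "u \<in> unit_circle"
  shows "Gfun k r u \<in> Fk"
proof -
  have conj: "(u ^ niho_exponent i) ^ 2 ^ k = u ^ niho_exponent (2 ^ r - i)" if "i \<le> 2 ^ r" for i
  proof -
    have "u ^ niho_exponent i * u ^ niho_exponent (2 ^ r - i) = 1"
      using unit_circle_power_mod[OF u, of "2 ^ k" 0]
      by (simp only: power_add[symmetric] niho_exponent_reflect[OF that]) simp
    then show ?thesis
      using unit_circle_conj[OF unit_circle_power[OF u]] by (metis inverse_unique)
  qed
  have "Gfun k r u ^ 2 ^ k = (\<Sum>i\<in>{1..2 ^ r - 1}. (u ^ niho_exponent i) ^ 2 ^ k)"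
    by (simp add: Gfun_eq power_two_pow_sum)
  also have "\<dots> = (\<Sum>i\<in>{1..2 ^ r - 1}. u ^ niho_exponent (2 ^ r - i))"
    by (rule sum.cong) (auto intro: conj)
  also have "\<dots> = Gfun k r u"
    unfolding Gfun_eq
    by (rule sum.reindex_bij_witness[where i = "\<lambda>i. 2 ^ r - i" and j = "\<lambda>i. 2 ^ r - i"]) auto
  finally show ?thesis
    by (simp add: mem_Fk_iff)
qed

(* The 2^(r-1)-th root of u inside U; u * G(u) is the geometric sum of its powers. *)
definition circle_root :: "'a \<Rightarrow> 'a" where
  "circle_root u = inverse u ^ 2 ^ (k - r + 1)"

definition trace_one :: "'a set" where
  "trace_one = {s. rel_trace s = 1}"

definition circle_param :: "'a \<Rightarrow> 'a" where
  "circle_param s = ((s + 1) / s) ^ 2 ^ (r - 1)"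

definition linearized :: "'a \<Rightarrow> 'a \<Rightarrow> 'a" where
  "linearized m s = m * s ^ 2 ^ r + s"

lemma two_pow_k_split: "(2::nat) ^ (k - r + 1) * 2 ^ (r - 1) = 2 ^ k"
proof -
  have "k - r + 1 + (r - 1) = k"
    using one_less_r r_less_k by simp
  then show ?thesis
    by (simp only: power_add[symmetric])
qed

lemma unit_circle_mult_Gfun:
  assumes u: "u \<in> unit_circle"
  shows "u * Gfun k r u = (\<Sum>i\<in>{1..2 ^ r - 1}. circle_root u ^ i)"
proof -
  have "u * u ^ niho_exponent i = circle_root u ^ i" for i
  proof -
    define I Q where "I = i * 2 ^ (k - r)" and "Q = 2 ^ k - (1::nat)"
    have "2 ^ k = Q + 1"
      by (simp add: Q_def)
    have "Suc (niho_exponent i) + i * 2 ^ (k - r + 1) = (I + 1) * Q + 2 + 2 * I"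
      by (simp add: niho_exponent_def I_def Q_def)
    also have "\<dots> = (2 ^ k + 1) * (I + 1) + 0"
      using \<open>2 ^ k = Q + 1\<close> by (simp add: algebra_simps)
    finally have "u ^ Suc (niho_exponent i) * u ^ (i * 2 ^ (k - r + 1)) = 1"
      by (simp only: power_add[symmetric] unit_circle_power_mod[OF u]) simp
    then have "u ^ Suc (niho_exponent i) = inverse (u ^ (i * 2 ^ (k - r + 1)))"
      by (metis inverse_unique mult.commute)
    then show ?thesis
      by (simp add: circle_root_def power_inverse mult.commute flip: power_mult)
  qed
  then show ?thesis
    by (simp add: Gfun_eq sum_distrib_left)
qed

lemma circle_root_unit_circle: "u \<in> unit_circle \<Longrightarrow> circle_root u \<in> unit_circle"
  by (simp add: circle_root_def unit_circle_power unit_circle_inverse)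

lemma circle_root_power:
  assumes "u \<in> unit_circle"
  shows "circle_root u ^ 2 ^ (r - 1) = u"
proof -
  have "circle_root u ^ 2 ^ (r - 1) = inverse u ^ (2 ^ (k - r + 1) * 2 ^ (r - 1))"
    by (simp only: circle_root_def power_mult)
  also have "\<dots> = inverse (u ^ 2 ^ k)"
    by (simp only: two_pow_k_split power_inverse)
  finally show ?thesis
    using unit_circle_conj[OF assms] by simp
qed

lemma trace_one_nonzero: "s \<in> trace_one \<Longrightarrow> s \<noteq> 0"
  by (auto simp: trace_one_def rel_trace_def power_0_left)

lemma trace_one_conj: "s \<in> trace_one \<Longrightarrow> s ^ 2 ^ k = s + 1"
proof -
  assume "s \<in> trace_one"
  then have "s + s ^ 2 ^ k = 1"
    by (simp add: trace_one_def rel_trace_def)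
  then have "s + (s + s ^ 2 ^ k) = s + 1"
    by (simp only:)
  then show ?thesis
    by (simp only: add_self_left)
qed

lemma mobius_conj:
  assumes "s \<in> trace_one"
  shows "((s + 1) / s) ^ 2 ^ k = s / (s + 1)"
proof -
  have "((s + 1) / s) ^ 2 ^ k = (s ^ 2 ^ k + 1) / s ^ 2 ^ k"
    by (simp add: power_divide power_two_pow_add)
  then show ?thesis
    using trace_one_conj[OF assms] by (simp add: add.assoc)
qed

lemma mobius_unit_circle:
  assumes "s \<in> trace_one"
  shows "(s + 1) / s \<in> unit_circle"
proof -
  have "s + 1 \<noteq> 0"
    using trace_one_conj[OF assms] trace_one_nonzero[OF assms] by (metis power_eq_0_iff)
  then have "((s + 1) / s) ^ 2 ^ k * ((s + 1) / s) = 1"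
    using mobius_conj[OF assms] trace_one_nonzero[OF assms] by simp
  then show ?thesis
    unfolding unit_circle_def by (simp only: mem_Collect_eq power_add power_one_right)
qed

lemma mobius_ne_1: "s \<in> trace_one \<Longrightarrow> (s + 1) / s \<noteq> 1"
  using trace_one_nonzero by (auto simp: field_simps)

lemma circle_param_unit_circle: "s \<in> trace_one \<Longrightarrow> circle_param s \<in> unit_circle"
  by (simp add: circle_param_def unit_circle_power mobius_unit_circle)

lemma circle_root_circle_param:
  assumes "s \<in> trace_one"
  shows "circle_root (circle_param s) = (s + 1) / s"
proof -
  have "circle_root (circle_param s) = inverse ((s + 1) / s) ^ (2 ^ (r - 1) * 2 ^ (k - r + 1))"
    by (simp only: circle_root_def circle_param_def power_inverse power_mult)
  also have "\<dots> = inverse (((s + 1) / s) ^ 2 ^ k)"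
    by (simp only: mult.commute[of "2 ^ (r - 1)"] two_pow_k_split power_inverse)
  finally show ?thesis
    using unit_circle_conj[OF mobius_unit_circle[OF assms]] by simp
qed

lemma circle_param_surj:
  assumes "u \<in> unit_circle" "u \<noteq> 1"
  obtains s where "s \<in> trace_one" "circle_param s = u"
proof -
  define v where "v = circle_root u"
  have "v \<in> unit_circle"
    using assms circle_root_unit_circle by (simp add: v_def)
  have "v \<noteq> 1"
    using assms circle_root_power[of u] by (auto simp: v_def)
  then have "1 + v \<noteq> 0"
    by (auto simp: add_eq_0_iff_eq)
  have "v \<noteq> 0"
    using unit_circle_nonzero[OF \<open>v \<in> unit_circle\<close>] .
  define s where "s = inverse (1 + v)"
  have "s ^ 2 ^ k = inverse (1 + inverse v)"
    using unit_circle_conj[OF \<open>v \<in> unit_circle\<close>] by (simp add: s_def power_inverse power_two_pow_add)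
  also have "\<dots> = v / (1 + v)"
    using \<open>v \<noteq> 0\<close> by (simp add: field_simps add.commute)
  finally have "rel_trace s = 1 / (1 + v) + v / (1 + v)"
    by (simp add: rel_trace_def s_def inverse_eq_divide)
  then have "s \<in> trace_one"
    using \<open>1 + v \<noteq> 0\<close> by (simp add: trace_one_def flip: add_divide_distrib)
  moreover have "(s + 1) / s = v"
    using \<open>1 + v \<noteq> 0\<close> by (simp add: s_def field_simps)
  ultimately show ?thesis
    using that assms circle_root_power by (simp add: circle_param_def v_def)
qed

lemma bij_betw_circle_param: "bij_betw circle_param trace_one (unit_circle - {1})"
proof (rule bij_betw_imageI)
  show "inj_on circle_param trace_one"
  proof (rule inj_onI)
    fix s s' assume "s \<in> trace_one" "s' \<in> trace_one" "circle_param s = circle_param s'"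
    then have "(s + 1) / s = (s' + 1) / s'"
      using circle_root_circle_param by metis
    then show "s = s'"
      using \<open>s \<in> trace_one\<close> \<open>s' \<in> trace_one\<close> trace_one_nonzero by (simp add: field_simps)
  qed
  show "circle_param ` trace_one = unit_circle - {1}"
  proof
    have "circle_param s \<noteq> 1" if "s \<in> trace_one" for s
      using circle_root_circle_param[OF that] mobius_ne_1[OF that] by (auto simp: circle_root_def)
    with circle_param_unit_circle show "circle_param ` trace_one \<subseteq> unit_circle - {1}"
      by auto
  next
    show "unit_circle - {1} \<subseteq> circle_param ` trace_one"
    proof
      fix u assume "u \<in> unit_circle - {1}"
      then obtain s where "s \<in> trace_one" "circle_param s = u"
        using circle_param_surj by blast
      then show "u \<in> circle_param ` trace_one"
        by blast
    qed
  qed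
qed

lemma linearized_add: "linearized m (s + t) = linearized m s + linearized m t"
  by (simp add: linearized_def power_two_pow_add algebra_simps)

lemma linearized_Fk: "m \<in> Fk \<Longrightarrow> t \<in> Fk \<Longrightarrow> linearized m t \<in> Fk"
  by (simp add: linearized_def Fk_add Fk_mult Fk_power)

lemma Gfun_circle_param_eq_iff:
  assumes s: "s \<in> trace_one"
  shows "Gfun k r (circle_param s) = rel_trace (a * circle_param s)
    \<longleftrightarrow> linearized (1 + rel_trace a) s = a"
proof -
  define u v S V where "u = circle_param s" and "v = (s + 1) / s"
    and "S = s ^ 2 ^ r" and "V = v ^ 2 ^ r"
  have u: "u \<in> unit_circle"
    using circle_param_unit_circle[OF s] by (simp add: u_def)
  have "s \<noteq> 0" "S \<noteq> 0"
    using trace_one_nonzero[OF s] by (simp_all add: S_def)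
  have "1 + v \<noteq> 0"
    using mobius_ne_1[OF s] by (auto simp: v_def add_eq_0_iff_eq)
  have V: "V = (S + 1) / S"
    by (simp add: V_def v_def S_def power_divide power_two_pow_add)
  have "u ^ 2 = V"
  proof -
    have "(2::nat) ^ (r - 1) * 2 = 2 ^ r"
      using one_less_r by (intro power_minus_mult) simp
    then show ?thesis
      by (simp only: u_def circle_param_def V_def v_def power_mult[symmetric])
  qed
  have "u * u ^ 2 ^ k = 1"
    using unit_circle_conj[OF u] unit_circle_nonzero[OF u] by simp
  then have trace: "u * rel_trace (a * u) = a * V + a ^ 2 ^ k"
    using \<open>u ^ 2 = V\<close> by (simp add: rel_trace_def power_mult_distrib power2_eq_square algebra_simps)
  have "Suc (2 ^ r - 1) = 2 ^ r"
    by simp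
  then have G: "u * Gfun k r u * (1 + v) = v + V"
    using unit_circle_mult_Gfun[OF u] circle_root_circle_param[OF s] geometric_sum[where m = "2 ^ r - 1" and v = v]
    by (simp add: u_def v_def V_def)
  have "Gfun k r u = rel_trace (a * u)
      \<longleftrightarrow> u * Gfun k r u * (1 + v) = u * rel_trace (a * u) * (1 + v)"
    using unit_circle_nonzero[OF u] \<open>1 + v \<noteq> 0\<close> by simp
  also have "\<dots> \<longleftrightarrow> v + V = (a * V + a ^ 2 ^ k) * (1 + v)"
    by (simp only: G trace)
  also have "\<dots> \<longleftrightarrow> (1 + a + a ^ 2 ^ k) * S + s = a"
    unfolding V v_def using \<open>s \<noteq> 0\<close> \<open>S \<noteq> 0\<close> by (rule mobius_equation_iff)
  finally show ?thesis
    by (simp add: u_def linearized_def rel_trace_def S_def add.assoc)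
qed

lemma card_Gfun_eq_rel_trace:
  "card {u \<in> unit_circle. Gfun k r u = rel_trace (a * u)}
    = (if rel_trace a = 1 then 1 else 0) + card {s \<in> trace_one. linearized (1 + rel_trace a) s = a}"
proof -
  define P where "P u \<longleftrightarrow> Gfun k r u = rel_trace (a * u)" for u
  define U1 where "U1 = {u \<in> unit_circle - {1}. P u}"
  have "P 1 \<longleftrightarrow> rel_trace a = 1"
    by (auto simp: P_def Gfun_one)
  then have "{u \<in> unit_circle. P u} = (if rel_trace a = 1 then insert 1 U1 else U1)"
    by (auto simp: U1_def)
  then have "card {u \<in> unit_circle. P u} = (if rel_trace a = 1 then 1 else 0) + card U1"
    by (simp add: U1_def)
  also have "U1 = circle_param ` {s \<in> trace_one. P (circle_param s)}"
    using bij_betw_imp_surj_on[OF bij_betw_circle_param] by (auto simp: U1_def)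
  also have "card \<dots> = card {s \<in> trace_one. P (circle_param s)}"
    using bij_betw_imp_inj_on[OF bij_betw_circle_param] by (auto intro: card_image inj_on_subset)
  also have "{s \<in> trace_one. P (circle_param s)} = {s \<in> trace_one. linearized (1 + rel_trace a) s = a}"
    using Gfun_circle_param_eq_iff by (auto simp: P_def)
  finally show ?thesis
    by (simp add: P_def)
qed

lemma dual_Glam_one:
  "dual (2 * k) (Glam k r 1) z = (if (if rel_trace z = 1 then 1 else 0)
     + card {s \<in> trace_one. linearized (1 + rel_trace z) s = z} = (2::nat) then 0 else 1)"
proof -
  have "Glam k r (1::'a) = (\<lambda>x. tr k (Gfun k r x))"
    by (simp add: Glam_def fun_eq_iff)
  then have "dual (2 * k) (Glam k r 1) z
      = (if card {u \<in> unit_circle. Gfun k r u = rel_trace (z * u)} = 2 then 0 else 1)"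
    using dual_tr_homogeneous[OF Gfun_zero Gfun_homogeneous Gfun_unit_circle_mem_Fk] by simp
  then show ?thesis
    by (simp only: card_Gfun_eq_rel_trace)
qed

lemma dual_Glam_one_trace_one: "rel_trace z = 1 \<Longrightarrow> dual (2 * k) (Glam k r 1) z = 0"
proof -
  assume "rel_trace z = 1"
  then have "{s \<in> trace_one. linearized (1 + rel_trace z) s = z} = {z}"
    by (auto simp: linearized_def trace_one_def)
  then show ?thesis
    using \<open>rel_trace z = 1\<close> dual_Glam_one[of z] by simp
qed

lemma dual_Glam_one_trace_ne_one:
  "rel_trace z \<noteq> 1 \<Longrightarrow> dual (2 * k) (Glam k r 1) z
    = (if card {s \<in> trace_one. linearized (1 + rel_trace z) s = z} = 2 then 0 else 1)"
  using dual_Glam_one[of z] by simp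

lemma D2_dual_Glam_one:
  assumes "a \<in> Fk" "b \<in> Fk"
  shows "D2 (dual (2 * k) (Glam k r 1)) a b x = 0"
proof (cases "rel_trace x = 1")
  case True
  then have zero: "dual (2 * k) (Glam k r 1) (x + c) = 0" if "c \<in> Fk" for c
    using that by (simp add: dual_Glam_one_trace_one rel_trace_add_Fk)
  show ?thesis
    using zero[OF Fk_zero] zero[OF \<open>a \<in> Fk\<close>] zero[OF \<open>b \<in> Fk\<close>] zero[OF Fk_add[OF assms]]
    by (simp add: D2_def add.assoc)
next
  case False
  define \<mu> where "\<mu> = 1 + rel_trace x"
  have "\<mu> \<in> Fk"
    by (simp add: \<mu>_def Fk_add rel_trace_mem_Fk)
  show ?thesis
  proof (rule D2_eq_0_if_card_preimage_indicator[where H = Fk and A = trace_one and L = "linearized \<mu>"])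
    show "linearized \<mu> ` Fk \<subseteq> Fk"
      using \<open>\<mu> \<in> Fk\<close> linearized_Fk by blast
    show "s' \<in> trace_one \<longleftrightarrow> s + s' \<in> Fk" if "s \<in> trace_one" for s s'
    proof -
      have "s + s' \<in> Fk \<longleftrightarrow> 1 + rel_trace s' = 0"
        using that by (simp add: trace_one_def rel_trace_add flip: rel_trace_eq_0_iff)
      then show ?thesis
        by (auto simp: trace_one_def add_eq_0_iff_eq)
    qed
    show "dual (2 * k) (Glam k r 1) (x + c)
        = (if card {s \<in> trace_one. linearized \<mu> s = x + c} = 2 then 0 else 1)" if "c \<in> Fk" for c
      using that False dual_Glam_one_trace_ne_one[of "x + c"] by (simp add: rel_trace_add_Fk \<mu>_def)
  qed (simp_all add: assms Fk_add linearized_add)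
qed

lemma niho_exponent_half:
  "niho_exponent (2 ^ (r - 1) - 1) = (2 ^ k + 1) * ((2 ^ (r - 1) - 1) * 2 ^ (k - r)) + 2 ^ (k - r + 1)"
proof -
  obtain A B where A: "(2::nat) ^ (k - r) = A + 1" and B: "(2::nat) ^ (r - 1) = B + 1"
    by (metis add.commute le_Suc_ex one_le_numeral one_le_power)
  have "(2::nat) ^ k = 2 * (A + 1) * (B + 1)"
    using two_pow_k_split A B by (simp flip: mult.assoc)
  then have "(2::nat) ^ k - 1 = 2 * A * B + 2 * A + 2 * B + 1" and "(2::nat) ^ k + 1 = 2 * A * B + 2 * A + 2 * B + 3"
    by (simp_all add: algebra_simps)
  moreover have "(2::nat) ^ (k - r + 1) = 2 * (A + 1)"
    using A by simp
  ultimately show ?thesis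
    unfolding niho_exponent_def A B by (simp add: algebra_simps)
qed

lemma power_niho_exponent_half_eq_Fk:
  assumes "lam \<in> Fk" "lam \<noteq> 0" and root: "delta ^ niho_exponent (2 ^ (r - 1) - 1) = lam"
  shows "delta = lam"
proof -
  define m where "m = (2 ^ (r - 1) - 1) * 2 ^ (k - r) + (1::nat)"
  have "delta \<noteq> 0"
    using root assms(2) by (auto simp: niho_exponent_def power_0_left)
  define u where "u = delta ^ (2 ^ k - 1)"
  have "(2 ^ k - 1) * (2 ^ k + 1) = (2::nat) ^ (2 * k) - 1"
    by (simp add: algebra_simps power_mult_distrib flip: power_add mult_2)
  then have "u ^ (2 ^ k + 1) = delta ^ (2 ^ (2 * k) - 1)"
    by (simp only: u_def power_mult[symmetric])
  then have u: "u \<in> unit_circle"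
    using power_card_minus_one[OF \<open>delta \<noteq> 0\<close>] by (simp add: unit_circle_def)
  have "u ^ niho_exponent (2 ^ (r - 1) - 1) = delta ^ ((2 ^ k - 1) * niho_exponent (2 ^ (r - 1) - 1))"
    by (simp only: u_def power_mult)
  also have "\<dots> = lam ^ (2 ^ k - 1)"
    by (simp only: mult.commute[of "2 ^ k - 1"] power_mult root)
  also have "\<dots> = 1"
    using assms(1,2) by (rule Fk_power_pred)
  finally have "u ^ 2 ^ (k - r + 1) = 1"
    by (simp only: niho_exponent_half unit_circle_power_mod[OF u])
  then have "u ^ 2 ^ (k - r + 1) = 1 ^ 2 ^ (k - r + 1)"
    by simp
  then have "u = 1"
    by (rule power_two_pow_inj)
  have "niho_exponent (2 ^ (r - 1) - 1) = (2 ^ k - 1) * m + 1"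
    by (simp only: niho_exponent_def m_def mult.commute[of "2 ^ k - 1"])
  then have "delta ^ niho_exponent (2 ^ (r - 1) - 1) = u ^ m * delta"
    by (simp only: u_def power_add power_mult power_one_right)
  then show ?thesis
    using root \<open>u = 1\<close> by simp
qed

end

theorem proposition3:
  fixes k r n :: nat and lam delta :: "'a::{field,finite}"
  assumes "n = 2 * k" and "1 < r" and "r < k" and "coprime r k"
    and "card (UNIV :: 'a set) = 2 ^ n"
    and "lam \<in> subfield_pow2 k" and "lam \<noteq> 0"
    and "delta ^ ((2^k - 1) * ((2^(r-1) - 1) * 2^(k - r) + 1) + 1) = lam"
  shows "(\<forall>x. dual n (Glam k r lam) x = dual n (Glam k r 1) (inverse delta * x))
       \<and> (\<forall>a\<in>subfield_pow2 k - {0}. \<forall>b\<in>subfield_pow2 k - {0}. \<forall>x.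
            D2 (dual n (Glam k r lam)) a b x = 0)"
proof -
  interpret niho k "TYPE('a)" r
    using assms by unfold_locales simp_all
  have "delta = lam"
    using power_niho_exponent_half_eq_Fk[OF assms(6,7)] assms(8)
    by (simp add: niho_exponent_def mult.commute)
  have "Glam k r lam = (\<lambda>x. Glam k r 1 (lam * x))"
    using Gfun_homogeneous[OF assms(6,7)] by (simp add: Glam_def fun_eq_iff mult.commute)
  then have dual_lam: "dual n (Glam k r lam) = (\<lambda>x. dual n (Glam k r 1) (inverse lam * x))"
    using dual_scale[OF assms(7)] by auto
  have "inverse lam * c \<in> Fk" if "c \<in> Fk" for c
    using that assms(6) by (simp add: Fk_mult Fk_inverse)
  then have "D2 (dual n (Glam k r lam)) a b x = 0" if "a \<in> Fk" "b \<in> Fk" for a b x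
    unfolding dual_lam D2_scale using that by (simp add: assms(1) D2_dual_Glam_one)
  then show ?thesis
    using dual_lam \<open>delta = lam\<close> by simp
qed

end
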